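(* Let $0\le V_0\le V_1\le\infty$. Then the set of points $p\in\bigcup_{V\in[V_0,V_1]}S_V$ whose forward semiorbit $\{f^k(p)\}_{k\ge0}$ is bounded is a closed subset of $\mathbb{R}^3$.
   Context: $f:\mathbb{R}^3\to\mathbb{R}^3$, $f(x,y,z)=(2xy-z,x,y)$. The Fricke–Vogt character is $I(x,y,z)=x^2+y^2+z^2-2xyz-1$, which satisfies $I\circ f=I$, and $S_V=\{p\in\mathbb{R}^3: I(p)=V\}$ for $V\ge0$ (for $V_1=\infty$ the union is over $[V_0,\infty)$). *)

theory Defs
  imports "HOL-Analysis.Analysis" "HOL-Library.Extended_Real"
begin

definition fmap :: "real \<times> real \<times> real \<Rightarrow> real \<times> real \<times> real" where
  "fmap p = (case p of (x, y, z) \<Rightarrow> (2 * x * y - z, x, y))"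

definition FV :: "real \<times> real \<times> real \<Rightarrow> real" where
  "FV p = (case p of (x, y, z) \<Rightarrow> x\<^sup>2 + y\<^sup>2 + z\<^sup>2 - 2 * x * y * z - 1)"

definition level_set :: "real \<Rightarrow> (real \<times> real \<times> real) set" where
  "level_set V = {p. FV p = V}"

end

theory Submission
  imports Defs
begin

(* The key object is the escape region E = {|x| > 1, |y| > 1, |z| \<le> |x||y|}.
   (1) Once an orbit enters E it stays there and |x| grows at least linearly,
       so the orbit is unbounded.
   (2) f maps E into the open region E' given by the strict inequalities.
   (3) If I(p) \<ge> 0 and the orbit never meets E, every coordinate stays below
       max(I(p) + 3, |y0|, |z0|) for p = (x0, y0, z0): a point outside E whose
       image is also outside E has first coordinate controlled by its third
       coordinate or by I.
   Hence for I(p) \<ge> 0 the orbit is bounded iff it never meets E', and the set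
   in question is the intersection of the closed slab {V0 \<le> I \<le> V1} with the
   closed sets f^-k(complement of E'), k \<ge> 0. *)

lemma fmap_simp [simp]: "fmap (x, y, z) = (2 * x * y - z, x, y)"
  by (simp add: fmap_def)

lemma FV_simp: "FV (x, y, z) = x\<^sup>2 + y\<^sup>2 + z\<^sup>2 - 2 * x * y * z - 1"
  by (simp add: FV_def)

lemma FV_fmap: "FV (fmap p) = FV p"
  by (cases p) (simp add: FV_simp power2_eq_square algebra_simps)

lemma FV_funpow: "FV ((fmap ^^ k) p) = FV p"
  by (induction k) (simp_all add: FV_fmap)

lemma FV_swap12: "FV (x, y, z) = FV (y, x, z)"
  by (simp add: FV_simp algebra_simps)

lemma bounded_orbit_shift:
  assumes "bounded (range (\<lambda>k. (fmap ^^ k) p))"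
  shows "bounded (range (\<lambda>j. (fmap ^^ j) ((fmap ^^ k) p)))"
proof -
  have "(fmap ^^ j) ((fmap ^^ k) p) = (fmap ^^ (j + k)) p" for j
    by (simp add: funpow_add)
  then have "range (\<lambda>j. (fmap ^^ j) ((fmap ^^ k) p)) \<subseteq> range (\<lambda>k. (fmap ^^ k) p)"
    by auto
  with assms show ?thesis
    using bounded_subset by blast
qed

section \<open>The escape region\<close>

definition escape_closed :: "real \<times> real \<times> real \<Rightarrow> bool" where
  "escape_closed p = (case p of (x, y, z) \<Rightarrow> 1 < \<bar>x\<bar> \<and> 1 < \<bar>y\<bar> \<and> \<bar>z\<bar> \<le> \<bar>x\<bar> * \<bar>y\<bar>)"

definition escape_open :: "real \<times> real \<times> real \<Rightarrow> bool" where
  "escape_open p = (case p of (x, y, z) \<Rightarrow> 1 < \<bar>x\<bar> \<and> 1 < \<bar>y\<bar> \<and> \<bar>z\<bar> < \<bar>x\<bar> * \<bar>y\<bar>)"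

lemma escape_open_imp_closed: "escape_open p \<Longrightarrow> escape_closed p"
  by (auto simp: escape_open_def escape_closed_def split: prod.splits)

lemma escape_first_coord:
  assumes "escape_closed (x, y, z)"
  shows "\<bar>x\<bar> * \<bar>y\<bar> \<le> \<bar>2 * x * y - z\<bar>"
proof -
  have "\<bar>2 * x * y\<bar> = 2 * (\<bar>x\<bar> * \<bar>y\<bar>)"
    by (simp add: abs_mult)
  moreover have "\<bar>z\<bar> \<le> \<bar>x\<bar> * \<bar>y\<bar>"
    using assms by (simp add: escape_closed_def)
  ultimately show ?thesis
    by linarith
qed

lemma fmap_escape_closed_open:
  assumes "escape_closed q"
  shows "escape_open (fmap q)"
proof -
  obtain x y z where q: "q = (x, y, z)"
    by (cases q) auto
  have x: "1 < \<bar>x\<bar>" and y: "1 < \<bar>y\<bar>"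
    using assms by (auto simp: escape_closed_def q)
  define t where "t = 2 * x * y - z"
  have t: "\<bar>x\<bar> * \<bar>y\<bar> \<le> \<bar>t\<bar>"
    using escape_first_coord assms by (simp add: q t_def)
  have "1 * \<bar>y\<bar> < \<bar>x\<bar> * \<bar>y\<bar>"
    using x y by (intro mult_strict_right_mono) auto
  moreover have "\<bar>t\<bar> * 1 \<le> \<bar>t\<bar> * \<bar>x\<bar>"
    using x by (intro mult_left_mono) auto
  ultimately show ?thesis
    using t x y by (simp add: q escape_open_def t_def[symmetric])
qed

lemma escape_step:
  assumes "escape_closed (x, y, z)" "m \<le> \<bar>x\<bar>" "m \<le> \<bar>y\<bar>" "1 < m"
  shows "escape_closed (fmap (x, y, z)) \<and> m \<le> \<bar>2 * x * y - z\<bar>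
         \<and> \<bar>x\<bar> + (m - 1) \<le> \<bar>2 * x * y - z\<bar>"
proof -
  have x: "1 < \<bar>x\<bar>"
    using assms by (simp add: escape_closed_def)
  define t where "t = 2 * x * y - z"
  have t: "\<bar>x\<bar> * \<bar>y\<bar> \<le> \<bar>t\<bar>"
    using escape_first_coord assms(1) by (simp add: t_def)
  have "\<bar>x\<bar> * m \<le> \<bar>x\<bar> * \<bar>y\<bar>"
    using assms(3) by (intro mult_left_mono) auto
  moreover have "\<bar>x\<bar> * m = \<bar>x\<bar> + \<bar>x\<bar> * (m - 1)"
    by (simp add: algebra_simps)
  moreover have "m - 1 \<le> \<bar>x\<bar> * (m - 1)"
    using x assms(4) mult_right_mono[of 1 "\<bar>x\<bar>" "m - 1"] by simp
  ultimately have grow: "\<bar>x\<bar> + (m - 1) \<le> \<bar>t\<bar>"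
    using t by linarith
  have "escape_open (fmap (x, y, z))"
    by (rule fmap_escape_closed_open[OF assms(1)])
  then show ?thesis
    using grow assms(2,4) by (simp add: escape_open_imp_closed t_def[symmetric])
qed

lemma escape_unbounded:
  assumes "escape_closed p"
  shows "\<not> bounded (range (\<lambda>k. (fmap ^^ k) p))"
proof
  assume "bounded (range (\<lambda>k. (fmap ^^ k) p))"
  then obtain B where B: "\<And>k. norm ((fmap ^^ k) p) \<le> B"
    by (auto simp: bounded_iff)
  obtain x0 y0 z0 where p: "p = (x0, y0, z0)"
    by (cases p) auto
  define m where "m = min \<bar>x0\<bar> \<bar>y0\<bar>"
  have m: "1 < m"
    using assms by (auto simp: escape_closed_def m_def p)
  have inv: "\<exists>x y z. (fmap ^^ k) p = (x, y, z) \<and> escape_closed (x, y, z)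
                \<and> m \<le> \<bar>x\<bar> \<and> m \<le> \<bar>y\<bar> \<and> real k * (m - 1) \<le> \<bar>x\<bar>" for k
  proof (induction k)
    case 0
    show ?case
      using assms m by (auto simp: m_def p)
  next
    case (Suc k)
    then obtain x y z where xyz: "(fmap ^^ k) p = (x, y, z)" "escape_closed (x, y, z)"
      "m \<le> \<bar>x\<bar>" "m \<le> \<bar>y\<bar>" "real k * (m - 1) \<le> \<bar>x\<bar>"
      by blast
    have "(fmap ^^ Suc k) p = (2 * x * y - z, x, y)"
      using xyz(1) by simp
    moreover have "escape_closed (2 * x * y - z, x, y)" "m \<le> \<bar>2 * x * y - z\<bar>"
      and "real (Suc k) * (m - 1) \<le> \<bar>2 * x * y - z\<bar>"
      using escape_step[OF xyz(2-4) m] xyz(5) by (auto simp: algebra_simps)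
    ultimately show ?case
      using xyz(3) by blast
  qed
  obtain k :: nat where k: "B / (m - 1) < real k"
    using reals_Archimedean2 by blast
  then have "B < real k * (m - 1)"
    using m by (simp add: field_simps)
  moreover obtain x y z where "(fmap ^^ k) p = (x, y, z)" "real k * (m - 1) \<le> \<bar>x\<bar>"
    using inv by blast
  moreover have "\<bar>x\<bar> \<le> norm (x, y, z)"
    using norm_fst_le[of x "(y, z)"] by simp
  ultimately show False
    using B[of k] by simp
qed

section \<open>Orbits avoiding the escape region are bounded\<close>

lemma FV_two_small:
  assumes "FV (x, y, z) = V" "\<bar>y\<bar> \<le> 1" "\<bar>z\<bar> \<le> 1" "0 \<le> V"
  shows "\<bar>x\<bar> \<le> V + 3"
proof (rule ccontr)
  assume "\<not> ?thesis"
  then have big: "V + 3 < \<bar>x\<bar>"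
    by simp
  have "\<bar>y * z\<bar> \<le> 1"
    using assms(2,3) by (simp add: abs_mult mult_le_one)
  then have "\<bar>2 * x * y * z\<bar> \<le> 2 * \<bar>x\<bar>"
    by (simp add: abs_mult mult.assoc mult_left_le)
  moreover have "x\<^sup>2 = 2 * x * y * z - y\<^sup>2 - z\<^sup>2 + 1 + V"
    using assms(1) by (simp add: FV_simp)
  moreover have "0 \<le> y\<^sup>2" "0 \<le> z\<^sup>2" "2 * x * y * z \<le> \<bar>2 * x * y * z\<bar>"
    by simp_all
  ultimately have "\<bar>x\<bar> * \<bar>x\<bar> \<le> 2 * \<bar>x\<bar> + 1 + V"
    unfolding abs_mult_self_eq power2_eq_square by linarith
  moreover have "\<bar>x\<bar> * (V + 3) < \<bar>x\<bar> * \<bar>x\<bar>"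
    using big assms(4) by (intro mult_strict_left_mono) auto
  moreover have "V + 1 \<le> \<bar>x\<bar> * (V + 1)"
    using big assms(4) mult_right_mono[of 1 "\<bar>x\<bar>" "V + 1"] by simp
  moreover have "\<bar>x\<bar> * (V + 3) = 2 * \<bar>x\<bar> + \<bar>x\<bar> * (V + 1)"
    by (simp add: algebra_simps)
  ultimately show False
    by linarith
qed

lemma first_coord_bound:
  assumes "FV (x, y, z) = V" "0 \<le> V"
    and "\<not> escape_closed (x, y, z)" "\<not> escape_closed (fmap (x, y, z))"
    and "\<bar>z\<bar> \<le> M" "V + 3 \<le> M"
  shows "\<bar>x\<bar> \<le> M"
proof (cases "\<bar>x\<bar> \<le> 1")
  case True
  then show ?thesis
    using assms by linarith
next
  case x: False
  consider "1 < \<bar>y\<bar>" | "\<bar>y\<bar> \<le> 1" "\<bar>z\<bar> \<le> 1" | "\<bar>y\<bar> \<le> 1" "1 < \<bar>z\<bar>"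
    by linarith
  then show ?thesis
  proof cases
    case 1
    then have "\<bar>x\<bar> * \<bar>y\<bar> < \<bar>z\<bar>"
      using assms(3) x by (auto simp: escape_closed_def)
    moreover have "\<bar>x\<bar> * 1 \<le> \<bar>x\<bar> * \<bar>y\<bar>"
      using 1 by (intro mult_left_mono) auto
    ultimately show ?thesis
      using assms(5) by linarith
  next
    case 2
    then show ?thesis
      using FV_two_small[OF assms(1) _ _ assms(2)] assms(6) by linarith
  next
    case 3
    define t where "t = 2 * x * y - z"
    have t: "\<bar>t\<bar> \<le> 1"
    proof (rule ccontr)
      assume t: "\<not> \<bar>t\<bar> \<le> 1"
      have "1 * 1 \<le> \<bar>t\<bar> * \<bar>x\<bar>"
        using t x by (intro mult_mono) auto
      then have "escape_closed (fmap (x, y, z))"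
        using t x 3 by (auto simp: escape_closed_def t_def)
      with assms(4) show False ..
    qed
    have "FV (x, t, y) = V"
      using assms(1) FV_fmap[of "(x, y, z)"] FV_swap12[of t x y] by (simp add: t_def)
    from FV_two_small[OF this t 3(1) assms(2)] show ?thesis
      using assms(6) by linarith
  qed
qed

lemma norm_triple_le: "norm (x, y, z) \<le> \<bar>x\<bar> + \<bar>y\<bar> + \<bar>z\<bar>" for x y z :: real
proof -
  have "norm (x, y, z) \<le> norm x + norm (y, z)"
    by (rule norm_Pair_le)
  also have "\<dots> \<le> norm x + (norm y + norm z)"
    using norm_Pair_le[of y z] by simp
  finally show ?thesis
    by simp
qed

text \<open>Step (3): all three coordinates of the orbit stay below
  M = max(I(p) + 3, |y0|, |z0|), where p = (x0, y0, z0); the third and second coordinates are earlier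
  first coordinates, and the first is controlled by \<open>first_coord_bound\<close>.\<close>

lemma avoiding_orbit_bounded:
  assumes avoid: "\<And>k. \<not> escape_closed ((fmap ^^ k) p)" and V: "0 \<le> FV p"
  shows "bounded (range (\<lambda>k. (fmap ^^ k) p))"
proof -
  obtain x0 y0 z0 where p: "p = (x0, y0, z0)"
    by (cases p) auto
  define M where "M = max (FV p + 3) (max \<bar>y0\<bar> \<bar>z0\<bar>)"
  have first: "\<bar>x\<bar> \<le> M" if "(fmap ^^ k) p = (x, y, z)" "\<bar>z\<bar> \<le> M" for k x y z
    using first_coord_bound[of x y z "FV p" M] that V avoid[of k] avoid[of "Suc k"]
      FV_funpow[of k p] by (simp add: M_def)
  have coords: "\<exists>x y z. (fmap ^^ k) p = (x, y, z) \<and> \<bar>x\<bar> \<le> M \<and> \<bar>y\<bar> \<le> M \<and> \<bar>z\<bar> \<le> M" for k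
  proof (induction k)
    case 0
    have "\<bar>x0\<bar> \<le> M"
      using first[of 0 x0 y0 z0] by (simp add: p M_def)
    then show ?case
      by (simp add: p M_def le_max_iff_disj)
  next
    case (Suc k)
    then obtain x y z where xyz: "(fmap ^^ k) p = (x, y, z)" "\<bar>x\<bar> \<le> M" "\<bar>y\<bar> \<le> M"
      by blast
    have "\<bar>2 * x * y - z\<bar> \<le> M"
      using first[of "Suc k" "2 * x * y - z" x y] xyz by simp
    then show ?case
      using xyz by simp
  qed
  have "norm ((fmap ^^ k) p) \<le> 3 * M" for k
  proof -
    obtain x y z where "(fmap ^^ k) p = (x, y, z)" "\<bar>x\<bar> \<le> M" "\<bar>y\<bar> \<le> M" "\<bar>z\<bar> \<le> M"
      using coords by blast
    then show ?thesis
      using norm_triple_le[of x y z] by simp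
  qed
  then show ?thesis
    by (auto simp: bounded_iff)
qed

lemma bounded_orbit_iff_avoids_escape:
  assumes "0 \<le> FV p"
  shows "bounded (range (\<lambda>k. (fmap ^^ k) p)) \<longleftrightarrow> (\<forall>k. \<not> escape_open ((fmap ^^ k) p))"
proof
  assume bd: "bounded (range (\<lambda>k. (fmap ^^ k) p))"
  show "\<forall>k. \<not> escape_open ((fmap ^^ k) p)"
    using escape_unbounded[OF escape_open_imp_closed] bounded_orbit_shift[OF bd] by blast
next
  assume avoid: "\<forall>k. \<not> escape_open ((fmap ^^ k) p)"
  have "\<not> escape_closed ((fmap ^^ k) p)" for k
    using fmap_escape_closed_open[of "(fmap ^^ k) p"] avoid[rule_format, of "Suc k"] by auto
  then show "bounded (range (\<lambda>k. (fmap ^^ k) p))"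
    using avoiding_orbit_bounded assms by blast
qed

lemma fmap_components: "fmap p = (2 * fst p * fst (snd p) - snd (snd p), fst p, fst (snd p))"
  by (cases p) simp

lemma FV_components:
  "FV p = (fst p)\<^sup>2 + (fst (snd p))\<^sup>2 + (snd (snd p))\<^sup>2 - 2 * fst p * fst (snd p) * snd (snd p) - 1"
  by (cases p) (simp add: FV_simp)

lemma continuous_on_fmap_funpow [continuous_intros]:
  "continuous_on S h \<Longrightarrow> continuous_on S (\<lambda>p. (fmap ^^ k) (h p))"
proof (induction k)
  case (Suc k)
  then show ?case
    unfolding funpow.simps comp_def fmap_components[of "(fmap ^^ k) _"]
    by (intro continuous_intros)
qed simp

lemma continuous_on_FV [continuous_intros]:
  "continuous_on S h \<Longrightarrow> continuous_on S (\<lambda>p. FV (h p))"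
  unfolding FV_components by (intro continuous_intros)

lemma closed_FV_slab:
  fixes V0 :: real and V1 :: ereal
  shows "closed {p. V0 \<le> FV p \<and> ereal (FV p) \<le> V1}"
proof (cases V1)
  case (real r)
  then show ?thesis
    by (simp, intro closed_Collect_conj closed_Collect_le continuous_intros)
next
  case PInf
  then show ?thesis
    by (simp, intro closed_Collect_le continuous_intros)
next
  case MInf
  then show ?thesis
    by simp
qed

lemma closed_orbits_avoiding_escape:
  "closed {p. \<forall>k. \<not> escape_open ((fmap ^^ k) p)}"
proof -
  have "open {p. escape_open ((fmap ^^ k) p)}" for k
    unfolding escape_open_def case_prod_beta
    by (intro open_Collect_conj open_Collect_less continuous_intros)
  then have "closed (\<Inter>k. - {p. escape_open ((fmap ^^ k) p)})"
    by (intro closed_INT) (simp add: closed_Compl)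
  then show ?thesis
    by (simp add: Compl_eq Collect_all_eq[symmetric])
qed

theorem lemma4p2:
  fixes V0 :: real and V1 :: ereal
  assumes "0 \<le> V0" and "ereal V0 \<le> V1"
  shows "closed {p \<in> (\<Union>V \<in> {V. V0 \<le> V \<and> ereal V \<le> V1}. level_set V).
                   bounded (range (\<lambda>k. (fmap ^^ k) p))}"
proof -
  have "{p \<in> (\<Union>V \<in> {V. V0 \<le> V \<and> ereal V \<le> V1}. level_set V).
           bounded (range (\<lambda>k. (fmap ^^ k) p))}
        = {p. V0 \<le> FV p \<and> ereal (FV p) \<le> V1} \<inter> {p. \<forall>k. \<not> escape_open ((fmap ^^ k) p)}"
    using bounded_orbit_iff_avoids_escape assms(1) by (auto simp: level_set_def)
  then show ?thesis
    using closed_FV_slab closed_orbits_avoiding_escape by (simp add: closed_Int)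
qed

end
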